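(* Let $\mathcal P=\{P_1,\dots,P_K\}$ be a finite collection of prototiles, with $P_k=\{0=p_{k,1}<p_{k,2}<\dots<p_{k,\ell_k}\}$. Then the subscripted tiling system $\widetilde T(\mathcal P)$ is a shift of finite type. More precisely, if $L$ is the maximal length $p_{k,\ell_k}+1$ of a prototile in $\mathcal P$, then a point $x\in\prod_{i\in\mathbb Z}\{(k,\ell):1\le k\le K,1\le \ell\le \ell_k\}$ belongs to $\widetilde T(\mathcal P)$ whenever every block of $L$ consecutive symbols occurring in $x$ occurs in some point of $\widetilde T(\mathcal P)$.
   Context: A prototile is a finite nonempty subset of $\mathbb Z$ with minimum $0$. The subscripted tiling system $\widetilde T(\mathcal P)$ is the set of points $x\in\prod_{i\in\mathbb Z}\{(k,\ell):1\le k\le K,\ 1\le\ell\le\ell_k\}$ such that there is a tiling $\mathbb Z=\bigcup_j(t_j+P_{k_j})$ of $\mathbb Z$ as a disjoint union of translates of prototiles with the property that for every $i$ there are $j$ and $\ell$ with $i\in t_j+P_{k_j}$ (namely $i=t_j+p_{k_j,\ell}$) and $x_i=(k_j,\ell)$. Equivalently, $x\in\widetilde T(\mathcal P)$ iff for every $i$, $x_i=(k,\ell)$ and $1\le\ell'\le\ell_k$ imply $x_{i+p_{k,\ell'}-p_{k,\ell}}=(k,\ell')$. It is considered with the shift $(\sigma x)_i=x_{i+1}$. *)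

theory Defs
  imports Main
begin

definition prototiles :: "nat \<Rightarrow> (nat \<Rightarrow> int set) \<Rightarrow> bool" where
  "prototiles K P \<longleftrightarrow> (\<forall>k\<in>{1..K}. finite (P k) \<and> P k \<noteq> {} \<and> Min (P k) = 0)"

definition ell :: "(nat \<Rightarrow> int set) \<Rightarrow> nat \<Rightarrow> nat" where
  "ell P k = card (P k)"

definition pt :: "(nat \<Rightarrow> int set) \<Rightarrow> nat \<Rightarrow> nat \<Rightarrow> int" where
  "pt P k l = sorted_list_of_set (P k) ! (l - 1)"

definition alphabet :: "nat \<Rightarrow> (nat \<Rightarrow> int set) \<Rightarrow> (nat \<times> nat) set" where
  "alphabet K P = {(k, l). 1 \<le> k \<and> k \<le> K \<and> 1 \<le> l \<and> l \<le> ell P k}"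

text \<open>A tiling of Z: a set of tiles (t,k), meaning the translate t + P k, such that every
  integer lies in exactly one tile (Z is the disjoint union of the translates).\<close>
definition is_tiling :: "nat \<Rightarrow> (nat \<Rightarrow> int set) \<Rightarrow> (int \<times> nat) set \<Rightarrow> bool" where
  "is_tiling K P Tiles \<longleftrightarrow> Tiles \<subseteq> UNIV \<times> {1..K} \<and>
     (\<forall>i::int. \<exists>!tk. tk \<in> Tiles \<and> i \<in> (\<lambda>p. fst tk + p) ` P (snd tk))"

definition subT :: "nat \<Rightarrow> (nat \<Rightarrow> int set) \<Rightarrow> (int \<Rightarrow> nat \<times> nat) set" where
  "subT K P = {x. (\<forall>i. x i \<in> alphabet K P) \<and>
     (\<exists>Tiles. is_tiling K P Tiles \<and>
        (\<forall>i. \<exists>t k l. (t, k) \<in> Tiles \<and> 1 \<le> l \<and> l \<le> ell P k \<and>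
                     i = t + pt P k l \<and> x i = (k, l)))}"

definition maxlen :: "nat \<Rightarrow> (nat \<Rightarrow> int set) \<Rightarrow> int" where
  "maxlen K P = Max ((\<lambda>k. Max (P k) + 1) ` {1..K})"

definition block_occurs :: "(int \<Rightarrow> 'a) \<Rightarrow> int \<Rightarrow> int \<Rightarrow> (int \<Rightarrow> 'a) \<Rightarrow> bool" where
  "block_occurs x i n y \<longleftrightarrow> (\<exists>j. \<forall>m\<in>{0..<n}. y (j + m) = x (i + m))"

end

theory Submission
  imports Defs
begin

text \<open>A point x over the alphabet lies in the subscripted tiling system iff it obeys the local rule
  that x i = (k, l) forces x (i - p k l + p k l') = (k, l') for all l': the tiles
  {i - p k l + q | q \<in> P k} read off from x then partition the integers. One instance of the rule
  only involves positions in the window [i - p k l, i - p k l + L), so it can be checked on a block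
  of length L, and such a block of x occurs in a point of the system, which obeys the rule.\<close>

definition subscript_consistent :: "(nat \<Rightarrow> int set) \<Rightarrow> (int \<Rightarrow> nat \<times> nat) \<Rightarrow> bool" where
  "subscript_consistent P x \<longleftrightarrow>
     (\<forall>i k l l'. x i = (k, l) \<longrightarrow> 1 \<le> l' \<longrightarrow> l' \<le> ell P k \<longrightarrow>
        x (i - pt P k l + pt P k l') = (k, l'))"

lemma bij_betw_pt:
  assumes "finite (P k)"
  shows "bij_betw (pt P k) {1..ell P k} (P k)"
proof -
  let ?xs = "sorted_list_of_set (P k)"
  have "bij_betw (\<lambda>l. l - 1) {1..ell P k} {..<length ?xs}"
    using assms by (intro bij_betw_byWitness[where f' = Suc]) (auto simp: ell_def)
  moreover have "bij_betw (nth ?xs) {..<length ?xs} (P k)"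
    using assms by (intro bij_betw_nth) auto
  ultimately show ?thesis
    using bij_betw_trans unfolding pt_def comp_def by blast
qed

lemma pt_mem: "finite (P k) \<Longrightarrow> l \<in> {1..ell P k} \<Longrightarrow> pt P k l \<in> P k"
  using bij_betw_pt bij_betwE by blast

lemma pt_inject:
  "finite (P k) \<Longrightarrow> l \<in> {1..ell P k} \<Longrightarrow> l' \<in> {1..ell P k} \<Longrightarrow> pt P k l = pt P k l' \<Longrightarrow> l = l'"
  using bij_betw_pt bij_betw_imp_inj_on inj_onD by metis

lemma pt_surj: "finite (P k) \<Longrightarrow> p \<in> P k \<Longrightarrow> \<exists>l\<in>{1..ell P k}. pt P k l = p"
  using bij_betw_pt bij_betw_imp_surj_on by (metis imageE)

lemma pt_less_maxlen:
  assumes "prototiles K P" "k \<in> {1..K}" "l \<in> {1..ell P k}"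
  shows "pt P k l \<in> {0..<maxlen K P}"
proof -
  have fin: "finite (P k)" and min: "Min (P k) = 0"
    using assms(1,2) unfolding prototiles_def by auto
  have mem: "pt P k l \<in> P k" using pt_mem[OF fin assms(3)] .
  have "0 \<le> pt P k l" using Min_le[OF fin mem] min by simp
  moreover have "pt P k l \<le> Max (P k)" using Max_ge[OF fin mem] .
  moreover have "Max (P k) + 1 \<le> maxlen K P"
    unfolding maxlen_def using assms(2) by (intro Max_ge) auto
  ultimately show ?thesis by simp
qed

lemma is_tiling_unique_tile:
  assumes "is_tiling K P Tiles" "(t, k) \<in> Tiles" "(t', k') \<in> Tiles"
    and "i - t \<in> P k" "i - t' \<in> P k'"
  shows "t' = t" "k' = k"
proof -
  have "\<exists>!tk. tk \<in> Tiles \<and> i \<in> (\<lambda>p. fst tk + p) ` P (snd tk)"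
    using assms(1) unfolding is_tiling_def by blast
  moreover have "i \<in> (\<lambda>p. t + p) ` P k" "i \<in> (\<lambda>p. t' + p) ` P k'"
    using image_eqI[of i "\<lambda>p. t + p" "i - t"] image_eqI[of i "\<lambda>p. t' + p" "i - t'"] assms(4,5)
    by auto
  ultimately have "(t', k') = (t, k)" using assms(2,3) by (metis fst_conv snd_conv)
  then show "t' = t" "k' = k" by auto
qed

lemma subT_subscript_consistent:
  assumes proto: "prototiles K P" and "y \<in> subT K P"
  shows "subscript_consistent P y"
  unfolding subscript_consistent_def
proof (intro allI impI)
  fix i k l l'
  assume yi: "y i = (k, l)" and "1 \<le> l'" "l' \<le> ell P k"
  then have l': "l' \<in> {1..ell P k}" by simp
  obtain Tiles where til: "is_tiling K P Tiles" and
    cov: "\<And>i. \<exists>t k l. (t, k) \<in> Tiles \<and> 1 \<le> l \<and> l \<le> ell P k \<and> i = t + pt P k l \<and> y i = (k, l)"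
    using assms(2) unfolding subT_def by blast
  have fin: "finite (P k)" if "(t, k) \<in> Tiles" for t k
    using that til proto unfolding is_tiling_def prototiles_def by auto
  obtain t where T: "(t, k) \<in> Tiles" and i: "i = t + pt P k l"
    using cov[of i] yi by auto
  define j where "j = t + pt P k l'"
  obtain t1 k1 l1 where T1: "(t1, k1) \<in> Tiles" and l1: "l1 \<in> {1..ell P k1}"
    and j: "j = t1 + pt P k1 l1" and yj: "y j = (k1, l1)"
    using cov[of j] by auto
  have "j - t = pt P k l'" "j - t1 = pt P k1 l1"
    using j unfolding j_def by simp_all
  then have "j - t \<in> P k" "j - t1 \<in> P k1"
    using pt_mem[OF fin[OF T] l'] pt_mem[OF fin[OF T1] l1] by simp_all
  then have "t1 = t" "k1 = k"
    using is_tiling_unique_tile[OF til T T1] by auto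
  moreover from this have "l1 = l'"
    using pt_inject[OF fin[OF T] _ l'] l1 j unfolding j_def by simp
  ultimately show "y (i - pt P k l + pt P k l') = (k, l')"
    using yj i unfolding j_def by simp
qed

lemma subT_if_subscript_consistent:
  assumes proto: "prototiles K P" and alph: "\<forall>i. x i \<in> alphabet K P"
    and cons: "subscript_consistent P x"
  shows "x \<in> subT K P"
proof -
  have letter: "k \<in> {1..K}" "l \<in> {1..ell P k}" if "x i = (k, l)" for i k l
    using alph[rule_format, of i] that by (auto simp: alphabet_def)
  have fin: "finite (P k)" if "x i = (k, l)" for i k l
    using proto letter(1)[OF that] unfolding prototiles_def by blast
  define Tiles where "Tiles = {(i - pt P k l, k) | i k l. x i = (k, l)}"
  have tiling: "is_tiling K P Tiles"
    unfolding is_tiling_def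
  proof (intro conjI allI)
    show "Tiles \<subseteq> UNIV \<times> {1..K}"
      using letter(1) unfolding Tiles_def by auto
  next
    fix i
    obtain k l where xi: "x i = (k, l)" by fastforce
    show "\<exists>!tk. tk \<in> Tiles \<and> i \<in> (\<lambda>p. fst tk + p) ` P (snd tk)"
    proof (rule ex1I[of _ "(i - pt P k l, k)"])
      have "pt P k l \<in> P k" using pt_mem[OF fin[OF xi] letter(2)[OF xi]] .
      then show "(i - pt P k l, k) \<in> Tiles \<and> i \<in> (\<lambda>p. fst (i - pt P k l, k) + p) ` P (snd (i - pt P k l, k))"
        using xi unfolding Tiles_def by force
    next
      fix tk assume "tk \<in> Tiles \<and> i \<in> (\<lambda>p. fst tk + p) ` P (snd tk)"
      then obtain j k' l' p where xj: "x j = (k', l')" and tk: "tk = (j - pt P k' l', k')"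
        and p: "p \<in> P k'" "i = j - pt P k' l' + p"
        unfolding Tiles_def by auto
      obtain l2 where l2: "l2 \<in> {1..ell P k'}" "pt P k' l2 = p"
        using pt_surj[of P k', OF fin[OF xj] p(1)] by blast
      have "x i = (k', l2)"
        using cons l2 xj p(2) unfolding subscript_consistent_def by auto
      then show "tk = (i - pt P k l, k)" using xi tk p(2) l2(2) by simp
    qed
  qed
  have "\<exists>t k l. (t, k) \<in> Tiles \<and> 1 \<le> l \<and> l \<le> ell P k \<and> i = t + pt P k l \<and> x i = (k, l)" for i
  proof -
    obtain k l where xi: "x i = (k, l)" by fastforce
    then have "(i - pt P k l, k) \<in> Tiles" unfolding Tiles_def by blast
    with xi letter(2)[OF xi] show ?thesis by force
  qed
  with tiling alph show ?thesis unfolding subT_def by blast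
qed

lemma subT_iff_subscript_consistent:
  assumes "prototiles K P"
  shows "x \<in> subT K P \<longleftrightarrow> (\<forall>i. x i \<in> alphabet K P) \<and> subscript_consistent P x"
proof
  assume x: "x \<in> subT K P"
  then have "\<forall>i. x i \<in> alphabet K P" unfolding subT_def by blast
  with subT_subscript_consistent[OF assms x]
  show "(\<forall>i. x i \<in> alphabet K P) \<and> subscript_consistent P x" by blast
qed (use subT_if_subscript_consistent[OF assms] in blast)

lemma subscript_consistent_if_blocks:
  assumes proto: "prototiles K P" and alph: "\<forall>i. x i \<in> alphabet K P"
    and blocks: "\<forall>i. \<exists>y. subscript_consistent P y \<and> block_occurs x i (maxlen K P) y"
  shows "subscript_consistent P x"
  unfolding subscript_consistent_def
proof (intro allI impI)
  fix i k l l'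
  assume xi: "x i = (k, l)" and "1 \<le> l'" "l' \<le> ell P k"
  then have l': "l' \<in> {1..ell P k}" by simp
  have k: "k \<in> {1..K}" and l: "l \<in> {1..ell P k}"
    using alph[rule_format, of i] xi by (auto simp: alphabet_def)
  define t where "t = i - pt P k l"
  obtain y j where cons: "subscript_consistent P y"
    and window: "\<And>m. m \<in> {0..<maxlen K P} \<Longrightarrow> y (j + m) = x (t + m)"
    using blocks unfolding block_occurs_def by blast
  have "y (j + pt P k l) = (k, l)"
    using window[OF pt_less_maxlen[OF proto k l]] xi unfolding t_def by simp
  then have "y (j + pt P k l') = (k, l')"
    using cons l' unfolding subscript_consistent_def by force
  then show "x (i - pt P k l + pt P k l') = (k, l')"
    using window[OF pt_less_maxlen[OF proto k l']] unfolding t_def by simp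
qed

theorem mainTheorem3:
  fixes K :: nat and P :: "nat \<Rightarrow> int set" and x :: "int \<Rightarrow> nat \<times> nat"
  assumes "prototiles K P"
    and "\<forall>i. x i \<in> alphabet K P"
    and "\<forall>i. \<exists>y\<in>subT K P. block_occurs x i (maxlen K P) y"
  shows "x \<in> subT K P"
proof -
  have "\<forall>i. \<exists>y. subscript_consistent P y \<and> block_occurs x i (maxlen K P) y"
    using assms(3) subT_iff_subscript_consistent[OF assms(1)] by blast
  then have "subscript_consistent P x"
    using subscript_consistent_if_blocks[OF assms(1,2)] by blast
  with assms(2) show ?thesis
    using subT_iff_subscript_consistent[OF assms(1)] by blast
qed

end
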